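(* Let $q$ be a primitive $n$-th root of unity. The Fourier transform $\mathcal F:{\mathfrak c}_q[SL_2]\to{\mathfrak u}_q(sl_2)$, $\mathcal F(h)=\sum_a\big(\int e_ah\big)f^a$, is invertible and given by $$\mathcal F(X^\alpha t^\beta Y^\gamma)=\sum_{l=0}^{n-1}\frac{q^{-(l+\alpha)(1-\beta)+\beta(n-1-\gamma)}}{n\,[n-1-\alpha]_{q^{-1}}!\,[n-1-\gamma]_q!}\,F^{n-1-\alpha}K^lE^{n-1-\gamma}$$ for $0\le\alpha,\beta,\gamma\le n-1$.
   Context: ${\mathfrak c}_q[SL_2]$ is the Hopf algebra generated by $X,t,Y$ with $X^n=Y^n=0$, $t^n=1$, $YX=XY$, $Xt=qtX$, $Yt=qtY$, $\Delta t=q\sum_{a=0}^{n-2}(q-1)^{a-1}(1-q^{-a-1})tY^a\otimes X^at$, $\Delta X=X\otimes1+\sum_{a=0}^{n-2}(q-1)^atY^a\otimes X^{a+1}$, $\Delta Y=1\otimes Y+\sum_{a=0}^{n-2}(1-q^{-1})^aY^{a+1}\otimes X^at$. ${\mathfrak u}_q(sl_2)$ is the Hopf algebra generated by $E,F,K$ with $E^n=F^n=0$, $K^n=1$, $KEK^{-1}=q^{-1}E$, $KFK^{-1}=qF$, $EF-FE=K-K^{-1}$, $\Delta K=K\otimes K$, $\Delta F=F\otimes1+K^{-1}\otimes F$, $\Delta E=E\otimes K+1\otimes E$. The two are dually paired by the Hopf pairing with $\langle X^it^jY^k,F^{i'}K^{j'}E^{k'}\rangle=\delta_{ii'}\delta_{kk'}q^{jj'}[i]_{q^{-1}}![k]_q!$,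 which identifies ${\mathfrak u}_q(sl_2)$ with the dual of ${\mathfrak c}_q[SL_2]$; $\{e_a\}$ is any basis of ${\mathfrak c}_q[SL_2]$ and $\{f^a\}$ the dual basis in ${\mathfrak u}_q(sl_2)$. $\int$ is the right integral on ${\mathfrak c}_q[SL_2]$ given on the basis by $\int X^\alpha t^\beta Y^\gamma=1$ if $\alpha=\gamma=n-1$, $\beta=1$, and $0$ otherwise. $[i]_q=(1-q^i)/(1-q)$, $[i]_q!=[i]_q\cdots[1]_q$. *)

theory Defs
  imports Complex_Main
begin

text \<open>Elements of c_q[SL_2] are encoded by their coordinates w.r.t. the PBW basis
  X^a t^b Y^c (0 <= a,b,c <= n-1); elements of u_q(sl_2) by their coordinates
  w.r.t. the PBW basis F^i K^j E^k (0 <= i,j,k <= n-1).\<close>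

type_synonym idx = "nat \<times> nat \<times> nat"

definition primitive_root :: "complex \<Rightarrow> nat \<Rightarrow> bool" where
  "primitive_root q n \<longleftrightarrow> n > 0 \<and> q ^ n = 1 \<and> (\<forall>k. 0 < k \<and> k < n \<longrightarrow> q ^ k \<noteq> 1)"

definition cube :: "nat \<Rightarrow> idx set" where
  "cube n = {..<n} \<times> {..<n} \<times> {..<n}"

definition space :: "nat \<Rightarrow> (idx \<Rightarrow> complex) set" where
  "space n = {u. \<forall>x. x \<notin> cube n \<longrightarrow> u x = 0}"

definition basis :: "idx \<Rightarrow> idx \<Rightarrow> complex" where
  "basis a = (\<lambda>x. if x = a then 1 else 0)"

definition qint :: "complex \<Rightarrow> nat \<Rightarrow> complex" where
  "qint q i = (1 - q ^ i) / (1 - q)"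

definition qfact :: "complex \<Rightarrow> nat \<Rightarrow> complex" where
  "qfact q i = (\<Prod>k\<in>{1..i}. qint q k)"

text \<open>Product of basis monomials in c_q[SL_2], from the relations
  X^n = Y^n = 0, t^n = 1, YX = XY, Xt = q tX, Yt = q tY:
  X^a1 t^b1 Y^c1 * X^a2 t^b2 Y^c2 = q^(c1 b2 - a2 b1) X^(a1+a2) t^(b1+b2) Y^(c1+c2).\<close>
definition cq_mult_basis :: "complex \<Rightarrow> nat \<Rightarrow> idx \<Rightarrow> idx \<Rightarrow> idx \<Rightarrow> complex" where
  "cq_mult_basis q n x y z =
     (case x of (a1, b1, c1) \<Rightarrow> case y of (a2, b2, c2) \<Rightarrow>
        if a1 + a2 < n \<and> c1 + c2 < n
        then q powi (int c1 * int b2 - int a2 * int b1) * basis (a1 + a2, (b1 + b2) mod n, c1 + c2) z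
        else 0)"

definition cq_mult :: "complex \<Rightarrow> nat \<Rightarrow> (idx \<Rightarrow> complex) \<Rightarrow> (idx \<Rightarrow> complex) \<Rightarrow> idx \<Rightarrow> complex" where
  "cq_mult q n g h = (\<lambda>z. \<Sum>x\<in>cube n. \<Sum>y\<in>cube n. g x * h y * cq_mult_basis q n x y z)"

text \<open>Right integral: \<integral> X^a t^b Y^c = 1 iff a = c = n-1, b = 1 (t^1, exponent read mod n).\<close>
definition cq_int :: "nat \<Rightarrow> (idx \<Rightarrow> complex) \<Rightarrow> complex" where
  "cq_int n h = h (n - 1, 1 mod n, n - 1)"

definition pair_basis :: "complex \<Rightarrow> idx \<Rightarrow> idx \<Rightarrow> complex" where
  "pair_basis q x y =
     (case x of (i, j, k) \<Rightarrow> case y of (i', j', k') \<Rightarrow>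
        if i = i' \<and> k = k' then q ^ (j * j') * qfact (inverse q) i * qfact q k else 0)"

definition pairing :: "complex \<Rightarrow> nat \<Rightarrow> (idx \<Rightarrow> complex) \<Rightarrow> (idx \<Rightarrow> complex) \<Rightarrow> complex" where
  "pairing q n g u = (\<Sum>x\<in>cube n. \<Sum>y\<in>cube n. g x * u y * pair_basis q x y)"

definition dual_basis :: "complex \<Rightarrow> nat \<Rightarrow> idx \<Rightarrow> idx \<Rightarrow> complex" where
  "dual_basis q n a = (THE u. u \<in> space n \<and>
      (\<forall>b\<in>cube n. pairing q n (basis b) u = (if b = a then 1 else 0)))"

definition fourier :: "complex \<Rightarrow> nat \<Rightarrow> (idx \<Rightarrow> complex) \<Rightarrow> idx \<Rightarrow> complex" where
  "fourier q n h = (\<lambda>z. \<Sum>a\<in>cube n. cq_int n (cq_mult q n (basis a) h) * dual_basis q n a z)"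

end

theory Submission
  imports Defs
begin

(* Pairing X^i t^j Y^k against F^i' K^l E^k' is nonzero only for i' = i, k' = k, where it is
   q^(jl) times two q-factorials; so the pairing with the monomial basis is a discrete Fourier
   transform in the exponent of K, and inverting it gives the dual basis explicitly:
   f^(i,j,k) = (n [i]_(q^-1)! [k]_q!)^-1 \<Sum>_l q^(-jl) F^i K^l E^k.
   The right integral of e_a X^\<alpha> t^\<beta> Y^\<gamma> is nonzero for exactly one a, namely
   a = (n-1-\<alpha>, 1-\<beta> mod n, n-1-\<gamma>), which yields the formula. For fixed \<alpha>, \<gamma> the
   transform acts on the t-degree \<beta> through the kernel matrix (\<beta>, l); quotients of its entries
   are characters of Z/n, so orthogonality of characters inverts it in both directions. *)

lemma qfact_nonzero:
  assumes "\<And>j. 1 \<le> j \<Longrightarrow> j \<le> k \<Longrightarrow> r ^ j \<noteq> 1"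
  shows "qfact r k \<noteq> 0"
proof -
  have "qint r j \<noteq> 0" if "1 \<le> j" "j \<le> k" for j
    using assms[OF that] assms[of 1] that by (simp add: qint_def)
  then show ?thesis
    by (simp add: qfact_def)
qed

lemma finite_cube [simp]: "finite (cube n)"
  by (simp add: cube_def)

lemma sum_basis:
  assumes "finite A" "y \<in> A"
  shows "(\<Sum>x\<in>A. basis y x * f x) = f y"
proof -
  have "(\<Sum>x\<in>A. basis y x * f x) = (\<Sum>x\<in>A. if x = y then f y else 0)"
    by (rule sum.cong) (auto simp: basis_def)
  then show ?thesis
    using assms by simp
qed

lemma sum_cube_fibre:
  assumes "i < n" "k < n"
    and "\<And>i' l k'. (i', l, k') \<in> cube n \<Longrightarrow> F (i', l, k') \<noteq> 0 \<Longrightarrow> i' = i \<and> k' = k"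
  shows "(\<Sum>y\<in>cube n. F y) = (\<Sum>l<n. F (i, l, k))"
proof -
  have "(\<Sum>l<n. F (i, l, k)) = sum F ((\<lambda>l. (i, l, k)) ` {..<n})"
    by (simp add: sum.reindex inj_on_def)
  also have "\<dots> = sum F (cube n)"
  proof (rule sum.mono_neutral_left)
    show "(\<lambda>l. (i, l, k)) ` {..<n} \<subseteq> cube n"
      using assms(1,2) by (auto simp: cube_def)
    show "\<forall>y\<in>cube n - (\<lambda>l. (i, l, k)) ` {..<n}. F y = 0"
    proof
      fix y
      assume y: "y \<in> cube n - (\<lambda>l. (i, l, k)) ` {..<n}"
      obtain i' l k' where "y = (i', l, k')"
        by (cases y) auto
      with y assms(3)[of i' l k'] show "F y = 0"
        by (auto simp: cube_def)
    qed
  qed simp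
  finally show ?thesis ..
qed

lemma pairing_basis_left:
  assumes "(i, j, k) \<in> cube n"
  shows "pairing q n (basis (i, j, k)) u
    = qfact (inverse q) i * qfact q k * (\<Sum>l<n. q ^ (j * l) * u (i, l, k))"
proof -
  have "pairing q n (basis (i, j, k)) u = (\<Sum>y\<in>cube n. u y * pair_basis q (i, j, k) y)"
    unfolding pairing_def using assms
    by (simp add: mult.assoc sum_basis flip: sum_distrib_left)
  also have "\<dots> = (\<Sum>l<n. u (i, l, k) * pair_basis q (i, j, k) (i, l, k))"
    using assms by (intro sum_cube_fibre) (auto simp: cube_def pair_basis_def split: if_splits)
  finally show ?thesis
    by (simp add: pair_basis_def sum_distrib_left mult_ac)
qed

lemma pairing_diff_right: "pairing q n g (\<lambda>z. u z - v z) = pairing q n g u - pairing q n g v"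
  by (simp add: pairing_def algebra_simps sum_subtractf)

definition integral_index :: "nat \<Rightarrow> idx" where
  "integral_index n = (n - 1, 1 mod n, n - 1)"

lemma cq_int_mult_basis_left:
  assumes "a \<in> cube n"
  shows "cq_int n (cq_mult q n (basis a) h)
    = (\<Sum>y\<in>cube n. h y * cq_mult_basis q n a y (integral_index n))"
  unfolding cq_int_def cq_mult_def integral_index_def[symmetric] using assms
  by (simp add: mult.assoc sum_basis flip: sum_distrib_left)

lemma fourier_basis_eq_sum:
  assumes "y \<in> cube n"
  shows "fourier q n (basis y) z
    = (\<Sum>a\<in>cube n. cq_mult_basis q n a y (integral_index n) * dual_basis q n a z)"
  unfolding fourier_def using assms
  by (simp add: cq_int_mult_basis_left sum_basis)

lemma fourier_eq_sum_basis: "fourier q n h z = (\<Sum>y\<in>cube n. h y * fourier q n (basis y) z)"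
proof -
  have "fourier q n h z
      = (\<Sum>a\<in>cube n. \<Sum>y\<in>cube n. h y * (cq_mult_basis q n a y (integral_index n) * dual_basis q n a z))"
    unfolding fourier_def by (simp add: cq_int_mult_basis_left sum_distrib_right mult.assoc)
  also have "\<dots> = (\<Sum>y\<in>cube n. h y * fourier q n (basis y) z)"
    by (subst sum.swap) (simp add: fourier_basis_eq_sum sum_distrib_left)
  finally show ?thesis .
qed

lemma add_mod_eq_iff_int:
  assumes "a < n"
  shows "(a + b) mod n = c mod n \<longleftrightarrow> int a = (int c - int b) mod int n"
proof -
  have "(a + b) mod n = c mod n \<longleftrightarrow> (int a + int b) mod int n = int c mod int n"
    by (metis of_nat_add of_nat_eq_iff of_nat_mod)
  also have "\<dots> \<longleftrightarrow> int a mod int n = (int c - int b) mod int n"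
    by (simp add: mod_eq_dvd_iff algebra_simps)
  finally show ?thesis
    using assms by simp
qed

lemma cq_mult_basis_at_integral_index:
  fixes \<beta> :: nat
  assumes "a \<in> cube n" "\<alpha> < n" "\<gamma> < n"
  defines "s \<equiv> nat ((1 - int \<beta>) mod int n)"
  shows "cq_mult_basis q n a (\<alpha>, \<beta>, \<gamma>) (integral_index n)
    = (if a = (n - 1 - \<alpha>, s, n - 1 - \<gamma>)
       then q powi (int (n - 1 - \<gamma>) * int \<beta> - int \<alpha> * int s) else 0)"
proof -
  obtain a1 a2 a3 where a: "a = (a1, a2, a3)"
    by (cases a) auto
  have "a1 < n" "a2 < n" "a3 < n"
    using assms(1) a by (auto simp: cube_def)
  have "(a2 + \<beta>) mod n = 1 mod n \<longleftrightarrow> int a2 = (1 - int \<beta>) mod int n"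
    using add_mod_eq_iff_int[OF \<open>a2 < n\<close>, of \<beta> 1] by simp
  also have "\<dots> \<longleftrightarrow> a2 = s"
    using \<open>a2 < n\<close> by (auto simp: s_def nat_eq_iff)
  finally have "(a2 + \<beta>) mod n = 1 mod n \<longleftrightarrow> a2 = s" .
  then have index: "(a1 + \<alpha> < n \<and> a3 + \<gamma> < n
        \<and> integral_index n = (a1 + \<alpha>, (a2 + \<beta>) mod n, a3 + \<gamma>))
      \<longleftrightarrow> a = (n - 1 - \<alpha>, s, n - 1 - \<gamma>)"
    using assms(2,3) unfolding integral_index_def a by auto
  have "cq_mult_basis q n a (\<alpha>, \<beta>, \<gamma>) (integral_index n)
      = (if a1 + \<alpha> < n \<and> a3 + \<gamma> < n \<and> integral_index n = (a1 + \<alpha>, (a2 + \<beta>) mod n, a3 + \<gamma>)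
         then q powi (int a3 * int \<beta> - int \<alpha> * int a2) else 0)"
    by (simp add: cq_mult_basis_def basis_def a)
  then show ?thesis
    unfolding index by (auto simp: a)
qed

definition dual_basis_closed :: "complex \<Rightarrow> nat \<Rightarrow> idx \<Rightarrow> idx \<Rightarrow> complex" where
  "dual_basis_closed q n = (\<lambda>(i, j, k) (i', l, k').
     if i' = i \<and> k' = k \<and> l < n
     then q powi (- int j * int l) / (of_nat n * qfact (inverse q) i * qfact q k) else 0)"

definition fourier_exponent :: "nat \<Rightarrow> nat \<Rightarrow> nat \<Rightarrow> nat \<Rightarrow> nat \<Rightarrow> int" where
  "fourier_exponent n \<alpha> \<beta> \<gamma> l = - (int l + int \<alpha>) * (1 - int \<beta>) + int \<beta> * (int n - 1 - int \<gamma>)"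

definition fourier_kernel :: "complex \<Rightarrow> nat \<Rightarrow> nat \<Rightarrow> nat \<Rightarrow> nat \<Rightarrow> nat \<Rightarrow> complex" where
  "fourier_kernel q n \<alpha> \<beta> \<gamma> l = q powi fourier_exponent n \<alpha> \<beta> \<gamma> l
     / (of_nat n * qfact (inverse q) (n - 1 - \<alpha>) * qfact q (n - 1 - \<gamma>))"

definition fourier_inverse :: "complex \<Rightarrow> nat \<Rightarrow> (idx \<Rightarrow> complex) \<Rightarrow> idx \<Rightarrow> complex" where
  "fourier_inverse q n u = (\<lambda>(\<alpha>, \<beta>, \<gamma>).
     if (\<alpha>, \<beta>, \<gamma>) \<in> cube n
     then (\<Sum>l<n. u (n - 1 - \<alpha>, l, n - 1 - \<gamma>) / fourier_kernel q n \<alpha> \<beta> \<gamma> l) / of_nat n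
     else 0)"

locale primitive_nth_root =
  fixes q :: complex and n :: nat
  assumes primitive: "primitive_root q n"
begin

lemma n_pos: "0 < n"
  using primitive by (simp add: primitive_root_def)

lemma q_nonzero: "q \<noteq> 0"
  using primitive n_pos by (auto simp: primitive_root_def power_0_left)

lemma power_int_mod: "q powi a = q powi (a mod int n)"
proof -
  have "q powi a = q powi (a mod int n) * (q ^ n) powi (a div int n)"
    using q_nonzero by (metis mod_mult_div_eq power_int_add power_int_mult power_int_of_nat)
  then show ?thesis
    using primitive by (simp add: primitive_root_def)
qed

lemma power_int_cong: "a mod int n = b mod int n \<Longrightarrow> q powi a = q powi b"
  by (metis power_int_mod)

lemma sum_root_powers: "(\<Sum>l<n. q powi (int l * a)) = (if int n dvd a then of_nat n else 0)"
proof (cases "int n dvd a")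
  case True
  then have "q powi (int l * a) = 1" for l
    using power_int_mod[of "int l * a"] by simp
  with True show ?thesis
    by simp
next
  case False
  define r where "r = nat (a mod int n)"
  have r: "0 < r" "r < n"
    using False n_pos by (auto simp: r_def dvd_eq_mod_eq_0 order_le_neq_trans nat_less_iff)
  have "int r = a mod int n"
    using n_pos by (simp add: r_def)
  then have qa: "q powi a = q ^ r"
    by (metis power_int_mod power_int_of_nat)
  have "q ^ r \<noteq> 1"
    using primitive r by (simp add: primitive_root_def)
  moreover have "(q ^ r) ^ n = 1"
    using primitive by (metis power_mult mult.commute power_one primitive_root_def)
  moreover have "q powi (int l * a) = (q ^ r) ^ l" for l
    by (metis qa mult.commute power_int_mult power_int_of_nat)
  ultimately show ?thesis
    using False by (simp add: sum_gp_strict)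
qed

lemma sum_root_powers_diff:
  assumes "y < n" "y' < n"
  shows "(\<Sum>l<n. q powi (int l * (int y' - int y))) = (if y = y' then of_nat n else 0)"
proof -
  have "int n dvd (int y' - int y) \<longleftrightarrow> y = y'"
  proof
    assume "int n dvd (int y' - int y)"
    moreover have "\<bar>int y' - int y\<bar> < int n"
      using assms by linarith
    ultimately show "y = y'"
      using dvd_imp_le_int[of "int y' - int y" "int n"] by linarith
  qed simp
  then show ?thesis
    by (simp add: sum_root_powers)
qed

lemma dft_inversion:
  assumes "l < n"
  shows "(\<Sum>j<n. q powi (- int j * int l) * (\<Sum>l'<n. q ^ (j * l') * w l')) = of_nat n * w l"
proof -
  have "(\<Sum>j<n. q powi (- int j * int l) * (\<Sum>l'<n. q ^ (j * l') * w l'))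
      = (\<Sum>l'<n. w l' * (\<Sum>j<n. q powi (int j * (int l' - int l))))"
  proof -
    have summand: "q powi (- int j * int l) * (q ^ (j * l') * w l') = w l' * q powi (int j * (int l' - int l))"
      for j l'
      using q_nonzero power_int_add[of q "- (int j * int l)" "int j * int l'"]
      by (simp add: right_diff_distrib' flip: power_int_of_nat)
    show ?thesis
      unfolding sum_distrib_left by (subst sum.swap) (simp only: summand)
  qed
  also have "\<dots> = of_nat n * w l"
    using assms by (simp add: sum_root_powers_diff if_distrib cong: if_cong)
  finally show ?thesis .
qed

lemma qfact_root_nonzero: "k < n \<Longrightarrow> qfact q k \<noteq> 0"
  using primitive by (intro qfact_nonzero) (simp add: primitive_root_def)

lemma qfact_inverse_root_nonzero: "k < n \<Longrightarrow> qfact (inverse q) k \<noteq> 0"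
  using primitive by (intro qfact_nonzero) (simp add: primitive_root_def power_inverse)

lemma pairing_dual_basis_closed:
  assumes "a \<in> cube n" "b \<in> cube n"
  shows "pairing q n (basis b) (dual_basis_closed q n a) = (if b = a then 1 else 0)"
proof -
  obtain i j k i' j' k' where ab: "a = (i, j, k)" "b = (i', j', k')"
    by (cases a, cases b) auto
  show ?thesis
  proof (cases "i' = i \<and> k' = k")
    case True
    define c where "c = qfact (inverse q) i * qfact q k"
    have "c \<noteq> 0"
      using assms ab by (simp add: c_def cube_def qfact_root_nonzero qfact_inverse_root_nonzero)
    have summand: "q ^ (j' * l) * dual_basis_closed q n (i, j, k) (i, l, k)
        = q powi (int l * (int j' - int j)) / (of_nat n * c)" if "l < n" for l
      using that q_nonzero power_int_add[of q "int j' * int l" "- (int j * int l)"]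
      by (simp add: dual_basis_closed_def c_def right_diff_distrib' mult_ac flip: power_int_of_nat)
    have "pairing q n (basis b) (dual_basis_closed q n a)
        = c * (\<Sum>l<n. q powi (int l * (int j' - int j)) / (of_nat n * c))"
      using assms(2) ab True by (simp add: pairing_basis_left summand c_def)
    also have "\<dots> = (\<Sum>l<n. q powi (int l * (int j' - int j))) / of_nat n"
      using \<open>c \<noteq> 0\<close> by (simp add: sum_distrib_left sum_divide_distrib)
    also have "\<dots> = (if b = a then 1 else 0)"
      using assms ab True \<open>c \<noteq> 0\<close> n_pos by (simp add: cube_def sum_root_powers_diff)
    finally show ?thesis .
  next
    case False
    then have "dual_basis_closed q n a (i', l, k') = 0" for l
      using ab by (auto simp: dual_basis_closed_def)
    with False show ?thesis
      using assms(2) ab by (simp add: pairing_basis_left)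
  qed
qed

lemma pairing_nondegenerate:
  assumes "u \<in> space n" and "\<forall>b\<in>cube n. pairing q n (basis b) u = 0"
  shows "u = (\<lambda>_. 0)"
proof
  fix z :: idx
  obtain i l k where z: "z = (i, l, k)"
    by (cases z) auto
  show "u z = 0"
  proof (cases "z \<in> cube n")
    case True
    then have ilk: "i < n" "l < n" "k < n"
      using z by (auto simp: cube_def)
    have "(\<Sum>l'<n. q ^ (j * l') * u (i, l', k)) = 0" if "j < n" for j
      using assms(2) ilk that pairing_basis_left[of i j k n q u]
      by (simp add: cube_def qfact_root_nonzero qfact_inverse_root_nonzero)
    then have "of_nat n * u (i, l, k) = 0"
      using dft_inversion[OF \<open>l < n\<close>, of "\<lambda>l'. u (i, l', k)"] by simp
    then show ?thesis
      using z n_pos by simp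
  next
    case False
    then show ?thesis
      using assms(1) unfolding space_def by blast
  qed
qed

lemma dual_basis_eq_closed:
  assumes "a \<in> cube n"
  shows "dual_basis q n a = dual_basis_closed q n a"
  unfolding dual_basis_def
proof (rule the_equality)
  have "dual_basis_closed q n a \<in> space n"
    using assms by (auto simp: space_def cube_def dual_basis_closed_def)
  then show "dual_basis_closed q n a \<in> space n \<and>
      (\<forall>b\<in>cube n. pairing q n (basis b) (dual_basis_closed q n a) = (if b = a then 1 else 0))"
    using assms pairing_dual_basis_closed by blast
  fix u
  assume u: "u \<in> space n \<and> (\<forall>b\<in>cube n. pairing q n (basis b) u = (if b = a then 1 else 0))"
  have "(\<lambda>z. u z - dual_basis_closed q n a z) \<in> space n"
    using u \<open>dual_basis_closed q n a \<in> space n\<close> by (simp add: space_def)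
  moreover have "\<forall>b\<in>cube n. pairing q n (basis b) (\<lambda>z. u z - dual_basis_closed q n a z) = 0"
    using u assms by (simp add: pairing_diff_right pairing_dual_basis_closed)
  ultimately have "(\<lambda>z. u z - dual_basis_closed q n a z) = (\<lambda>_. 0)"
    by (rule pairing_nondegenerate)
  then show "u = dual_basis_closed q n a"
    by (simp add: fun_eq_iff)
qed

lemma power_int_fourier_exponent:
  fixes \<beta> :: nat
  assumes "\<gamma> < n"
  defines "s \<equiv> nat ((1 - int \<beta>) mod int n)"
  shows "q powi (int (n - 1 - \<gamma>) * int \<beta> - int \<alpha> * int s) * q powi (- int s * int l)
    = q powi fourier_exponent n \<alpha> \<beta> \<gamma> l"
proof -
  define e where "e = int (n - 1 - \<gamma>) * int \<beta> - int \<alpha> * int s"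
  have "int s = (1 - int \<beta>) mod int n"
    using n_pos by (simp add: s_def)
  then have "int n dvd (1 - int \<beta>) - int s"
    by (simp add: mod_eq_dvd_iff)
  moreover have "fourier_exponent n \<alpha> \<beta> \<gamma> l - (e - int s * int l)
      = - (int l + int \<alpha>) * ((1 - int \<beta>) - int s)"
    using assms(1) by (simp add: fourier_exponent_def e_def algebra_simps)
  ultimately have "(e - int s * int l) mod int n = fourier_exponent n \<alpha> \<beta> \<gamma> l mod int n"
    by (metis dvd_mult mod_eq_dvd_iff mult_minus_left)
  then show ?thesis
    unfolding e_def[symmetric]
    using power_int_cong q_nonzero by (metis power_int_add diff_conv_add_uminus mult_minus_left)
qed

lemma fourier_basis_apply:
  assumes "\<alpha> < n" "\<beta> < n" "\<gamma> < n"
  shows "fourier q n (basis (\<alpha>, \<beta>, \<gamma>)) (i, l, k)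
    = (if i = n - 1 - \<alpha> \<and> k = n - 1 - \<gamma> \<and> l < n then fourier_kernel q n \<alpha> \<beta> \<gamma> l else 0)"
proof -
  define s where "s = nat ((1 - int \<beta>) mod int n)"
  define e where "e = int (n - 1 - \<gamma>) * int \<beta> - int \<alpha> * int s"
  have s: "(n - 1 - \<alpha>, s, n - 1 - \<gamma>) \<in> cube n"
    using n_pos by (simp add: cube_def s_def nat_less_iff)
  have "(\<alpha>, \<beta>, \<gamma>) \<in> cube n"
    using assms by (simp add: cube_def)
  then have "fourier q n (basis (\<alpha>, \<beta>, \<gamma>)) (i, l, k)
      = (\<Sum>a\<in>cube n. cq_mult_basis q n a (\<alpha>, \<beta>, \<gamma>) (integral_index n) * dual_basis q n a (i, l, k))"
    by (rule fourier_basis_eq_sum)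
  also have "\<dots> = (\<Sum>a\<in>cube n.
      if a = (n - 1 - \<alpha>, s, n - 1 - \<gamma>) then q powi e * dual_basis q n a (i, l, k) else 0)"
    using assms by (intro sum.cong) (simp_all add: cq_mult_basis_at_integral_index s_def e_def)
  also have "\<dots> = q powi e * dual_basis_closed q n (n - 1 - \<alpha>, s, n - 1 - \<gamma>) (i, l, k)"
    using s by (simp add: dual_basis_eq_closed)
  also have "\<dots> = (if i = n - 1 - \<alpha> \<and> k = n - 1 - \<gamma> \<and> l < n
      then q powi e * q powi (- int s * int l)
        / (of_nat n * qfact (inverse q) (n - 1 - \<alpha>) * qfact q (n - 1 - \<gamma>)) else 0)"
    by (simp add: dual_basis_closed_def)
  finally show ?thesis
    using power_int_fourier_exponent[OF assms(3), of \<beta> \<alpha> l]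
    by (simp only: s_def e_def fourier_kernel_def)
qed

lemma fourier_basis_formula:
  assumes "\<alpha> < n" "\<beta> < n" "\<gamma> < n"
  shows "fourier q n (basis (\<alpha>, \<beta>, \<gamma>))
    = (\<lambda>z. \<Sum>l<n. fourier_kernel q n \<alpha> \<beta> \<gamma> l * basis (n - 1 - \<alpha>, l, n - 1 - \<gamma>) z)"
proof -
  have "fourier q n (basis (\<alpha>, \<beta>, \<gamma>)) (i, m, k)
      = (\<Sum>l<n. fourier_kernel q n \<alpha> \<beta> \<gamma> l * basis (n - 1 - \<alpha>, l, n - 1 - \<gamma>) (i, m, k))"
    for i m k
  proof -
    have "(\<Sum>l<n. fourier_kernel q n \<alpha> \<beta> \<gamma> l * basis (n - 1 - \<alpha>, l, n - 1 - \<gamma>) (i, m, k))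
        = (\<Sum>l<n. if l = m then if i = n - 1 - \<alpha> \<and> k = n - 1 - \<gamma>
            then fourier_kernel q n \<alpha> \<beta> \<gamma> m else 0 else 0)"
      by (rule sum.cong) (auto simp: basis_def)
    with assms show ?thesis
      by (simp add: fourier_basis_apply)
  qed
  then show ?thesis
    by (simp add: fun_eq_iff split_paired_all)
qed

lemma fourier_apply:
  "fourier q n h (i, m, k) = (if (i, m, k) \<in> cube n
     then \<Sum>\<beta><n. h (n - 1 - i, \<beta>, n - 1 - k) * fourier_kernel q n (n - 1 - i) \<beta> (n - 1 - k) m
     else 0)"
proof (cases "(i, m, k) \<in> cube n")
  case True
  then have "i < n" "m < n" "k < n"
    by (auto simp: cube_def)
  have "fourier q n h (i, m, k) = (\<Sum>y\<in>cube n. h y * fourier q n (basis y) (i, m, k))"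
    by (rule fourier_eq_sum_basis)
  also have "\<dots> = (\<Sum>\<beta><n. h (n - 1 - i, \<beta>, n - 1 - k) * fourier q n (basis (n - 1 - i, \<beta>, n - 1 - k)) (i, m, k))"
    using \<open>i < n\<close> \<open>k < n\<close> by (intro sum_cube_fibre) (auto simp: cube_def fourier_basis_apply split: if_splits)
  also have "\<dots> = (\<Sum>\<beta><n. h (n - 1 - i, \<beta>, n - 1 - k) * fourier_kernel q n (n - 1 - i) \<beta> (n - 1 - k) m)"
    using \<open>i < n\<close> \<open>m < n\<close> \<open>k < n\<close> by (intro sum.cong) (auto simp: fourier_basis_apply)
  finally show ?thesis
    using True by simp
next
  case False
  have "fourier q n (basis y) (i, m, k) = 0" if "y \<in> cube n" for y
    using that False by (cases y) (auto simp: cube_def fourier_basis_apply)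
  then have "(\<Sum>y\<in>cube n. h y * fourier q n (basis y) (i, m, k)) = 0"
    by (simp add: sum.neutral)
  with False show ?thesis
    by (simp only: fourier_eq_sum_basis[of q n h] if_False)
qed

lemma fourier_kernel_divide:
  assumes "\<alpha> < n" "\<gamma> < n"
  shows "fourier_kernel q n \<alpha> \<beta>' \<gamma> l' / fourier_kernel q n \<alpha> \<beta> \<gamma> l
    = q powi (fourier_exponent n \<alpha> \<beta>' \<gamma> l' - fourier_exponent n \<alpha> \<beta> \<gamma> l)"
  using assms n_pos q_nonzero
  by (simp add: fourier_kernel_def power_int_diff qfact_root_nonzero qfact_inverse_root_nonzero)

lemma sum_fourier_kernel_quotients_over_K:
  assumes "\<alpha> < n" "\<gamma> < n" "\<beta> < n" "\<beta>' < n"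
  shows "(\<Sum>l<n. fourier_kernel q n \<alpha> \<beta>' \<gamma> l / fourier_kernel q n \<alpha> \<beta> \<gamma> l)
    = (if \<beta> = \<beta>' then of_nat n else 0)"
proof -
  define c where "c = (int \<alpha> + int n - 1 - int \<gamma>) * (int \<beta>' - int \<beta>)"
  have "fourier_exponent n \<alpha> \<beta>' \<gamma> l - fourier_exponent n \<alpha> \<beta> \<gamma> l = c + int l * (int \<beta>' - int \<beta>)"
    for l
    by (simp add: fourier_exponent_def c_def algebra_simps)
  then have "(\<Sum>l<n. fourier_kernel q n \<alpha> \<beta>' \<gamma> l / fourier_kernel q n \<alpha> \<beta> \<gamma> l)
      = q powi c * (\<Sum>l<n. q powi (int l * (int \<beta>' - int \<beta>)))"
    using assms q_nonzero by (simp add: fourier_kernel_divide power_int_add sum_distrib_left)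
  then show ?thesis
    using assms by (simp add: sum_root_powers_diff c_def)
qed

lemma sum_fourier_kernel_quotients_over_t:
  assumes "\<alpha> < n" "\<gamma> < n" "l < n" "m < n"
  shows "(\<Sum>\<beta><n. fourier_kernel q n \<alpha> \<beta> \<gamma> m / fourier_kernel q n \<alpha> \<beta> \<gamma> l)
    = (if l = m then of_nat n else 0)"
proof -
  have "fourier_exponent n \<alpha> \<beta> \<gamma> m - fourier_exponent n \<alpha> \<beta> \<gamma> l
      = (int l - int m) + int \<beta> * (int m - int l)" for \<beta>
    by (simp add: fourier_exponent_def algebra_simps)
  then have "(\<Sum>\<beta><n. fourier_kernel q n \<alpha> \<beta> \<gamma> m / fourier_kernel q n \<alpha> \<beta> \<gamma> l)
      = q powi (int l - int m) * (\<Sum>\<beta><n. q powi (int \<beta> * (int m - int l)))"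
    using assms q_nonzero by (simp add: fourier_kernel_divide power_int_add sum_distrib_left)
  then show ?thesis
    using assms by (simp add: sum_root_powers_diff)
qed

lemma fourier_inverse_fourier:
  assumes "h \<in> space n"
  shows "fourier_inverse q n (fourier q n h) = h"
proof -
  have "fourier_inverse q n (fourier q n h) (\<alpha>, \<beta>, \<gamma>) = h (\<alpha>, \<beta>, \<gamma>)" for \<alpha> \<beta> \<gamma>
  proof (cases "(\<alpha>, \<beta>, \<gamma>) \<in> cube n")
    case True
    then have "\<alpha> < n" "\<beta> < n" "\<gamma> < n"
      by (auto simp: cube_def)
    have "fourier_inverse q n (fourier q n h) (\<alpha>, \<beta>, \<gamma>)
        = (\<Sum>l<n. \<Sum>\<beta>'<n. h (\<alpha>, \<beta>', \<gamma>)
            * (fourier_kernel q n \<alpha> \<beta>' \<gamma> l / fourier_kernel q n \<alpha> \<beta> \<gamma> l)) / of_nat n"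
      using True \<open>\<alpha> < n\<close> \<open>\<gamma> < n\<close>
      by (simp add: fourier_inverse_def fourier_apply cube_def sum_divide_distrib)
    also have "\<dots> = (\<Sum>\<beta>'<n. h (\<alpha>, \<beta>', \<gamma>)
        * (\<Sum>l<n. fourier_kernel q n \<alpha> \<beta>' \<gamma> l / fourier_kernel q n \<alpha> \<beta> \<gamma> l)) / of_nat n"
      by (subst sum.swap) (simp add: sum_distrib_left)
    also have "\<dots> = h (\<alpha>, \<beta>, \<gamma>)"
      using \<open>\<alpha> < n\<close> \<open>\<beta> < n\<close> \<open>\<gamma> < n\<close> n_pos
      by (simp add: sum_fourier_kernel_quotients_over_K if_distrib cong: if_cong)
    finally show ?thesis .
  next
    case False
    with assms show ?thesis
      by (simp add: fourier_inverse_def space_def)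
  qed
  then show ?thesis
    by (simp add: fun_eq_iff split_paired_all)
qed

lemma fourier_fourier_inverse:
  assumes "u \<in> space n"
  shows "fourier q n (fourier_inverse q n u) = u"
proof -
  have "fourier q n (fourier_inverse q n u) (i, m, k) = u (i, m, k)" for i m k
  proof (cases "(i, m, k) \<in> cube n")
    case True
    then have "i < n" "m < n" "k < n"
      by (auto simp: cube_def)
    define \<alpha> \<gamma> where "\<alpha> = n - 1 - i" and "\<gamma> = n - 1 - k"
    have "\<alpha> < n" "\<gamma> < n" and complement: "n - Suc i = \<alpha>" "n - Suc k = \<gamma>" "n - Suc \<alpha> = i" "n - Suc \<gamma> = k"
      using \<open>i < n\<close> \<open>k < n\<close> by (auto simp: \<alpha>_def \<gamma>_def)
    have "fourier q n (fourier_inverse q n u) (i, m, k)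
        = (\<Sum>\<beta><n. \<Sum>l<n. u (i, l, k)
            * (fourier_kernel q n \<alpha> \<beta> \<gamma> m / fourier_kernel q n \<alpha> \<beta> \<gamma> l)) / of_nat n"
      using True \<open>\<alpha> < n\<close> \<open>\<gamma> < n\<close>
      by (simp add: fourier_apply fourier_inverse_def cube_def complement sum_divide_distrib
          sum_distrib_right)
    also have "\<dots> = (\<Sum>l<n. u (i, l, k)
        * (\<Sum>\<beta><n. fourier_kernel q n \<alpha> \<beta> \<gamma> m / fourier_kernel q n \<alpha> \<beta> \<gamma> l)) / of_nat n"
      by (subst sum.swap) (simp add: sum_distrib_left)
    also have "\<dots> = u (i, m, k)"
      using \<open>\<alpha> < n\<close> \<open>\<gamma> < n\<close> \<open>m < n\<close> n_pos
      by (simp add: sum_fourier_kernel_quotients_over_t if_distrib cong: if_cong)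
    finally show ?thesis .
  next
    case False
    with assms show ?thesis
      by (simp add: fourier_apply space_def)
  qed
  then show ?thesis
    by (simp add: fun_eq_iff split_paired_all)
qed

lemma bij_betw_fourier: "bij_betw (fourier q n) (space n) (space n)"
proof (rule bij_betw_byWitness[where f' = "fourier_inverse q n"])
  show "fourier q n ` space n \<subseteq> space n" "fourier_inverse q n ` space n \<subseteq> space n"
    by (auto simp: space_def fourier_apply fourier_inverse_def)
qed (simp_all add: fourier_inverse_fourier fourier_fourier_inverse)

end

theorem proposition5p2:
  fixes q :: complex and n :: nat
  assumes "primitive_root q n"
  shows "bij_betw (fourier q n) (space n) (space n) \<and>
    (\<forall>\<alpha><n. \<forall>\<beta><n. \<forall>\<gamma><n.
       fourier q n (basis (\<alpha>, \<beta>, \<gamma>)) =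
       (\<lambda>z. \<Sum>l<n.
          q powi (- (int l + int \<alpha>) * (1 - int \<beta>) + int \<beta> * (int n - 1 - int \<gamma>))
          / (of_nat n * qfact (inverse q) (n - 1 - \<alpha>) * qfact q (n - 1 - \<gamma>))
          * basis (n - 1 - \<alpha>, l, n - 1 - \<gamma>) z))"
proof -
  interpret primitive_nth_root q n
    using assms by unfold_locales
  show ?thesis
    using bij_betw_fourier fourier_basis_formula
    unfolding fourier_kernel_def fourier_exponent_def by blast
qed

end
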